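(* Let $Z_i=(X_i,Y_i)$, $i=1,\dots,n+1$, be i.i.d., let $V(\cdot)$ be a fixed score function with $V_i=V(Z_i)$ and $P_{V|x}(v)=\mathbb P(V(Z)\le v\mid X=x)$, and let $H(x_1,x_2)=\exp(-d(x_1,x_2)/h_n)$ with $d\ge0$, $d(x,x)=0$. Assume: $X$ has a continuous distribution on $[0,1]^p$, $V(Z)$ is continuous given $X=x$, and there are constants $L>0$, $\beta\ge0$ with $p_X\ge1/L$ on $[0,1]^p$ and (i) $\max_v|P_{V|x}(v)-P_{V|x'}(v)|\le L\,d(x,x')$ for all $x,x'\in[0,1]^p$; (ii) $\mathbb P(d(x_0,X)\le\varepsilon)\ge\varepsilon^\beta/L$ for all $\varepsilon\le h_n$, $x_0\in[0,1]^p$; (iii) $h_n\to0$ and $nh_n^\beta/\ln n\to\infty$. For $x_0\in[0,1]^p$ define $B(x_0)=\sum_{j=1}^{n+1}H(x_0,X_j)$, $\Delta(x_0,X)=H(x_0,X)\max_v|P_{V|X}(v)-P_{V|x_0}(v)|$ and $\Delta(x_0)=\sum_{i=1}^n\Delta(x_0,X_i)$. Then: (a) There is a constant $C>0$ such that for all $x_0\in[0,1]^p$, $$\mathbb P\Big(B(x_0)\le\frac{nh_n^\beta}{2eL}\Big)\le\exp\Big(-\frac{nh_n^\beta}{8L}\Big),\qquad \frac{\Delta(x_0)}{B(x_0)\vee(nh_n^\beta)}\le C\,h_n\ln(h_n^{-1}).$$ (b) Let $B_i=B(X_i)$, $H_{ij}=H(X_i,X_j)$ and $R_i=\frac{1}{B_i}\sum_{j\le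 n,\,j\ne i}H_{ij}\big(\mathbb 1\{V_j<V_i\}-P_{V|X_j}(V_i)\big)$. Then for every $i=1,\dots,n+1$ and every value of $V_i$, $$\mathbb P\Big(|R_i|\ge\sqrt{\tfrac{\ln n}{B_i}}\,\Big|\,X_1,\dots,X_{n+1},V_i\Big)\le\frac{2}{n^2}.$$
   Context: $a\vee b=\max\{a,b\}$; $e$ is Euler's number. *)

theory Defs
  imports "HOL-Probability.Probability"
begin

definition unit_cube :: "(real^'p) set" where
  "unit_cube = {x. \<forall>k. 0 \<le> x $ k \<and> x $ k \<le> 1}"

definition kernH :: "('x \<Rightarrow> 'x \<Rightarrow> real) \<Rightarrow> real \<Rightarrow> 'x \<Rightarrow> 'x \<Rightarrow> real" where
  "kernH d h x1 x2 = exp (- d x1 x2 / h)"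

definition Bsum :: "('x \<Rightarrow> 'x \<Rightarrow> real) \<Rightarrow> real \<Rightarrow> (nat \<Rightarrow> 'a \<Rightarrow> 'x) \<Rightarrow> nat \<Rightarrow> 'x \<Rightarrow> 'a \<Rightarrow> real" where
  "Bsum d h X n x0 \<omega> = (\<Sum>j\<in>{1..n+1}. kernH d h x0 (X j \<omega>))"

definition cdf_gap :: "('x \<Rightarrow> real \<Rightarrow> real) \<Rightarrow> 'x \<Rightarrow> 'x \<Rightarrow> real" where
  "cdf_gap F x x0 = (SUP v. \<bar>F x v - F x0 v\<bar>)"

definition Delta_sum :: "('x \<Rightarrow> 'x \<Rightarrow> real) \<Rightarrow> real \<Rightarrow> ('x \<Rightarrow> real \<Rightarrow> real) \<Rightarrow> (nat \<Rightarrow> 'a \<Rightarrow> 'x) \<Rightarrow> nat \<Rightarrow> 'x \<Rightarrow> 'a \<Rightarrow> real" where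
  "Delta_sum d h F X n x0 \<omega> = (\<Sum>i\<in>{1..n}. kernH d h x0 (X i \<omega>) * cdf_gap F (X i \<omega>) x0)"

definition Rstat :: "('x \<Rightarrow> 'x \<Rightarrow> real) \<Rightarrow> real \<Rightarrow> ('x \<Rightarrow> real \<Rightarrow> real) \<Rightarrow> (nat \<Rightarrow> 'a \<Rightarrow> 'x) \<Rightarrow> (nat \<Rightarrow> 'a \<Rightarrow> real) \<Rightarrow> nat \<Rightarrow> nat \<Rightarrow> 'a \<Rightarrow> real" where
  "Rstat d h F X Vs n i \<omega> =
     (1 / Bsum d h X n (X i \<omega>) \<omega>) *
     (\<Sum>j\<in>{1..n} - {i}. kernH d h (X i \<omega>) (X j \<omega>) *
        ((if Vs j \<omega> < Vs i \<omega> then 1 else 0) - F (X j \<omega>) (Vs i \<omega>)))"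

definition cond_sigma :: "'a measure \<Rightarrow> (nat \<Rightarrow> 'a \<Rightarrow> 'x::topological_space) \<Rightarrow> (nat \<Rightarrow> 'a \<Rightarrow> real) \<Rightarrow> nat \<Rightarrow> nat \<Rightarrow> 'a measure" where
  "cond_sigma M X Vs n i =
     vimage_algebra (space M) (\<lambda>\<omega>. ((\<lambda>j\<in>{1..n+1}. X j \<omega>), Vs i \<omega>))
       (PiM {1..n+1} (\<lambda>_. borel) \<Otimes>\<^sub>M borel)"

end

theory Submission
  imports Defs "HOL-Probability.Hoeffding"
begin

text \<open>
  On the event \<open>d x0 X \<le> h\<close> the kernel is at least \<open>exp (-1)\<close>, so
  \<open>E exp (- e ln 2 H(x0, X)) \<le> 1 - P(d x0 X \<le> h) / 2 \<le> exp (- h^\<beta> / (2 L))\<close>; a Chernoff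
  bound over the independent \<open>X_j\<close> and \<open>ln 2 \<le> 3/4\<close> give the lower tail of \<open>B(x0)\<close>. The bias
  bound is deterministic: with \<open>t = (1 + \<beta>) h ln (1/h)\<close>, points with \<open>d x0 X_i \<le> t\<close> contribute at
  most \<open>L t H(x0, X_i)\<close> by the Lipschitz condition, the others have weight \<open>H \<le> h^(1+\<beta>)\<close>.

  Given \<open>X_1, \<dots>, X_(n+1)\<close> and \<open>V_i\<close>, the indicators \<open>1{V_j < V_i}\<close>, \<open>j \<noteq> i\<close>, are
  independent Bernoulli variables with means \<open>P_(V|X_j)(V_i)\<close>, so \<open>R_i = \<Sum>_j a_j (b_j - p_j)\<close> with
  \<open>a_j = H_ij / B_i\<close>. On the product space of the sample, Hoeffding's lemma is applied one
  coordinate at a time inside the Chernoff integral; the optimal parameter gives the tail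
  \<open>exp (- 2 s^2 / \<Sum> a_j^2)\<close> with \<open>s^2 = ln n / B_i\<close>, and \<open>\<Sum> a_j^2 \<le> 1 / B_i\<close> because \<open>H \<le> 1\<close>.
  The conditional bound then follows from \<open>P(A \<inter> {W \<in> S}) \<le> 2 n^(-2) P(W \<in> S)\<close> for all
  measurable \<open>S\<close>, where \<open>W = (X_1, \<dots>, X_(n+1), V_i)\<close> generates the conditioning \<sigma>-algebra.
\<close>

lemma ln_2_le_3_4: "ln 2 \<le> (3/4::real)"
proof -
  have "(2::real) \<le> (1 + (3/4) / real 8) ^ 8" by (simp add: divide_simps)
  also have "\<dots> \<le> exp (3/4)" by (rule exp_ge_one_plus_x_over_n_power_n) auto
  finally have "ln 2 \<le> ln (exp (3/4::real))" by (subst ln_le_cancel_iff) auto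
  thus ?thesis by simp
qed

lemma cdf_bounds:
  fixes f :: "real \<Rightarrow> real"
  assumes "mono f" "(f \<longlongrightarrow> 0) at_bot" "(f \<longlongrightarrow> 1) at_top"
  shows "0 \<le> f v" "f v \<le> 1"
proof -
  have "eventually (\<lambda>w. f w \<le> f v) at_bot"
    unfolding eventually_at_bot_linorder by (auto intro: monoD[OF assms(1)])
  from tendsto_upperbound[OF assms(2) this] show "0 \<le> f v" by simp
  have "eventually (\<lambda>w. f v \<le> f w) at_top"
    unfolding eventually_at_top_linorder by (auto intro: monoD[OF assms(1)])
  from tendsto_lowerbound[OF assms(3) this] show "f v \<le> 1" by simp
qed

lemma cdf_gap_le:
  assumes "\<And>v. \<bar>F x v - F x0 v\<bar> \<le> c"
  shows "cdf_gap F x x0 \<le> c"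
  unfolding cdf_gap_def by (rule cSUP_least) (use assms in auto)

lemma kernel_gap_term_le:
  fixes r L \<beta> \<delta> g :: real
  assumes r: "0 < r" and L: "L > 0" and \<beta>: "\<beta> \<ge> 0" and "r \<le> 1"
    and g: "g \<le> L * \<delta>" "g \<le> 1"
  shows "exp (- \<delta> / r) * g \<le> L * ((1 + \<beta>) * r * ln (1 / r)) * exp (- \<delta> / r) + r * r powr \<beta>"
proof -
  define t where "t = (1 + \<beta>) * r * ln (1 / r)"
  have t: "t \<ge> 0" unfolding t_def using r \<open>r \<le> 1\<close> \<beta> by simp
  show ?thesis
  proof (cases "\<delta> \<le> t")
    case True
    hence "exp (- \<delta> / r) * g \<le> exp (- \<delta> / r) * (L * t)"
      using g L by (intro mult_left_mono) (auto intro: order_trans)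
    moreover have "exp (- \<delta> / r) * (L * t) = L * t * exp (- \<delta> / r)" by simp
    moreover have "0 \<le> r * r powr \<beta>" using r by simp
    ultimately show ?thesis unfolding t_def[symmetric] by linarith
  next
    case False
    have "exp (- \<delta> / r) * g \<le> exp (- \<delta> / r)" using g by simp
    also have "\<dots> \<le> exp (- t / r)" using False r by (simp add: divide_right_mono)
    also have "exp (- t / r) = r powr (1 + \<beta>)" using r by (simp add: t_def ln_div powr_def)
    also have "\<dots> = r * r powr \<beta>" using r by (simp add: powr_add)
    finally show ?thesis unfolding t_def[symmetric] using L t by (simp add: add_increasing)
  qed
qed

lemma kernel_gap_ratio_le:
  fixes r L \<beta> :: real and \<delta> g :: "nat \<Rightarrow> real"
  assumes n: "n \<ge> 1" and r: "0 < r" "r \<le> exp (-1)" and L: "L > 0" and \<beta>: "\<beta> \<ge> 0"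
    and g: "\<And>i. i \<in> {1..n} \<Longrightarrow> g i \<le> L * \<delta> i \<and> g i \<le> 1"
  shows "(\<Sum>i\<in>{1..n}. exp (- \<delta> i / r) * g i) / max (\<Sum>j\<in>{1..n+1}. exp (- \<delta> j / r)) (real n * r powr \<beta>)
         \<le> (L * (1 + \<beta>) + 1) * r * ln (1 / r)"
proof -
  define t where "t = (1 + \<beta>) * r * ln (1 / r)"
  define m where "m = max (\<Sum>j\<in>{1..n+1}. exp (- \<delta> j / r)) (real n * r powr \<beta>)"
  have "r \<le> 1" using r by (meson exp_le_one_iff neg_le_0_iff_le order.trans zero_le_one)
  have ln_ge_1: "ln (1 / r) \<ge> 1"
  proof -
    have "exp 1 \<le> 1 / r" using r by (simp add: exp_minus field_simps)
    thus ?thesis using r by (subst ln_ge_iff) auto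
  qed
  have t: "t \<ge> 0" unfolding t_def using r \<open>r \<le> 1\<close> \<beta> by simp
  have m: "m > 0" using n r by (simp add: m_def less_max_iff_disj)
  have "(\<Sum>i\<in>{1..n}. exp (- \<delta> i / r) * g i) \<le> (\<Sum>i\<in>{1..n}. L * t * exp (- \<delta> i / r) + r * r powr \<beta>)"
    unfolding t_def using kernel_gap_term_le[OF r(1) L \<beta> \<open>r \<le> 1\<close>] g by (intro sum_mono) auto
  also have "\<dots> = L * t * (\<Sum>i\<in>{1..n}. exp (- \<delta> i / r)) + r * (real n * r powr \<beta>)"
    by (simp add: sum.distrib sum_distrib_left algebra_simps)
  also have "\<dots> \<le> L * t * m + r * m"
  proof (intro add_mono mult_left_mono)
    have "(\<Sum>i\<in>{1..n}. exp (- \<delta> i / r)) \<le> (\<Sum>j\<in>{1..n+1}. exp (- \<delta> j / r))"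
      by (intro sum_mono2) auto
    thus "(\<Sum>i\<in>{1..n}. exp (- \<delta> i / r)) \<le> m" unfolding m_def by (rule max.coboundedI1)
  qed (use L t r in \<open>auto simp: m_def\<close>)
  finally have "(\<Sum>i\<in>{1..n}. exp (- \<delta> i / r) * g i) / m \<le> L * t + r"
    using m by (simp add: field_simps)
  also have "\<dots> \<le> (L * (1 + \<beta>) + 1) * r * ln (1 / r)"
    using ln_ge_1 r by (simp add: t_def algebra_simps)
  finally show ?thesis by (simp add: m_def)
qed

lemma hoeffding_two_point:
  fixes p t :: real
  assumes "0 \<le> p" "p \<le> 1"
  shows "p * exp (t * (1 - p)) + (1 - p) * exp (- t * p) \<le> exp (t\<^sup>2 / 8)"
proof -
  have nonneg: "p * exp (t * (1 - p)) + (1 - p) * exp (- t * p) \<le> exp (t\<^sup>2 / 8)"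
    if "0 \<le> p" "p \<le> 1" "0 \<le> t" for p t :: real
  proof -
    have pos: "1 + p * (exp t - 1) > 0"
      using that by (intro add_pos_nonneg mult_nonneg_nonneg) auto
    have "p * exp (t * (1 - p)) + (1 - p) * exp (- t * p) = exp (- t * p) * (1 + p * (exp t - 1))"
      by (simp add: algebra_simps exp_add[symmetric] exp_diff)
    also have "\<dots> = exp (- t * p + ln (1 + p * (exp t - 1)))"
      using pos by (simp add: exp_diff exp_minus field_simps)
    also have "\<dots> \<le> exp (t\<^sup>2 / 8)"
      using Hoeffdings_lemma_aux[of t p] that by simp
    finally show ?thesis .
  qed
  show ?thesis
  proof (cases "0 \<le> t")
    case False
    with nonneg[of "1 - p" "- t"] assms show ?thesis by (simp add: algebra_simps)
  qed (use nonneg assms in blast)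
qed

lemma (in prob_space) real_cond_exp_indicator_le:
  assumes sub: "subalgebra M G" and A: "A \<in> sets M"
    and bound: "\<And>B. B \<in> sets G \<Longrightarrow> prob (A \<inter> B) \<le> c * prob B"
  shows "AE \<omega> in M. real_cond_exp M G (indicator A) \<omega> \<le> c"
proof -
  interpret finite_measure_subalgebra M G by unfold_locales (rule sub)
  define CE where "CE = real_cond_exp M G (indicator A)"
  define E where "E = {\<omega> \<in> space M. c < CE \<omega>}"
  have intA: "integrable M (indicator A :: 'a \<Rightarrow> real)"
    using A by (intro integrable_real_indicator) (auto simp: emeasure_eq_measure)
  have EG: "E \<in> sets G"
  proof -
    have "{\<omega> \<in> space G. c < CE \<omega>} \<in> sets G" unfolding CE_def by measurable
    thus ?thesis using sub by (simp add: E_def subalgebra_def)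
  qed
  hence EM: "E \<in> sets M" using sub by (auto simp: subalgebra_def)
  have iCE: "integrable M (\<lambda>\<omega>. indicator E \<omega> * CE \<omega>)"
    using integrable_mult_indicator[OF EM real_cond_exp_int(1)[OF intA]] by (simp add: CE_def)
  have ic: "integrable M (\<lambda>\<omega>. indicator E \<omega> * c)"
    using EM by (intro integrable_mult_left integrable_real_indicator) (auto simp: emeasure_eq_measure)
  have "(\<integral>\<omega>. indicator E \<omega> * CE \<omega> \<partial>M) = (\<integral>\<omega>. indicator E \<omega> * indicator A \<omega> \<partial>M)"
    using real_cond_exp_intA[OF intA EG] by (simp add: CE_def set_lebesgue_integral_def)
  also have "\<dots> = prob (A \<inter> E)"
    using A EM by (simp add: indicator_inter_arith[symmetric] Int_commute)
  also have "\<dots> \<le> c * prob E" by (rule bound[OF EG])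
  also have "\<dots> = (\<integral>\<omega>. indicator E \<omega> * c \<partial>M)" using EM by simp
  finally have le: "(\<integral>\<omega>. indicator E \<omega> * CE \<omega> \<partial>M) \<le> (\<integral>\<omega>. indicator E \<omega> * c \<partial>M)" .
  have ge: "(\<integral>\<omega>. indicator E \<omega> * c \<partial>M) \<le> (\<integral>\<omega>. indicator E \<omega> * CE \<omega> \<partial>M)"
    using ic iCE by (intro integral_mono) (auto simp: E_def indicator_def)
  have "AE \<omega> in M. indicator E \<omega> * c = indicator E \<omega> * CE \<omega>"
    using ic iCE le ge by (intro integral_ineq_eq_0_then_AE) (auto simp: E_def indicator_def)
  thus ?thesis by (rule AE_mp) (auto simp: E_def CE_def indicator_def)
qed

lemma real_cond_exp_indicator_nonmeasurable:
  assumes "A \<subseteq> space M" "A \<notin> sets M"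
  shows "real_cond_exp M G (indicator A) \<omega> \<le> 0"
proof -
  have "(\<lambda>x. ennreal (indicator A x :: real)) \<notin> borel_measurable M"
  proof
    assume "(\<lambda>x. ennreal (indicator A x :: real)) \<in> borel_measurable M"
    hence "(\<lambda>x. enn2real (ennreal (indicator A x :: real))) \<in> borel_measurable M" by measurable
    hence "A \<inter> space M \<in> sets M" by (simp add: borel_measurable_indicator_iff)
    with assms show False by (simp add: Int_absorb2)
  qed
  thus ?thesis unfolding real_cond_exp_def nn_cond_exp_def by simp
qed

lemma nn_integral_fst_mult_indicator:
  fixes N :: "('b::topological_space \<times> 'c) measure" and g r :: "'b \<Rightarrow> ennreal"
  assumes [measurable]: "fst \<in> N \<rightarrow>\<^sub>M borel"
    and D[measurable]: "D \<in> sets N" and [measurable]: "r \<in> borel_measurable borel" "g \<in> borel_measurable borel"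
    and cond: "\<And>A. A \<in> sets borel \<Longrightarrow>
      emeasure N ({y \<in> space N. fst y \<in> A} \<inter> D) = (\<integral>\<^sup>+u. r u * indicator A u \<partial>distr N borel fst)"
  shows "(\<integral>\<^sup>+y. g (fst y) * indicator D y \<partial>N) = (\<integral>\<^sup>+y. r (fst y) * g (fst y) \<partial>N)"
proof -
  have law: "distr (density N (indicator D)) borel fst = density (distr N borel fst) r"
  proof (rule measure_eqI)
    fix A assume "A \<in> sets (distr (density N (indicator D)) borel fst)"
    hence A[measurable]: "A \<in> sets borel" by simp
    have "emeasure (distr (density N (indicator D)) borel fst) A
        = (\<integral>\<^sup>+y. indicator D y * indicator (fst -` A \<inter> space N) y \<partial>N)"
      by (simp add: emeasure_distr emeasure_density)
    also have "\<dots> = (\<integral>\<^sup>+y. indicator ({y \<in> space N. fst y \<in> A} \<inter> D) y \<partial>N)"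
      by (intro nn_integral_cong) (auto simp: indicator_def)
    also have "\<dots> = emeasure N ({y \<in> space N. fst y \<in> A} \<inter> D)"
      by (rule nn_integral_indicator) measurable
    also have "\<dots> = emeasure (density (distr N borel fst) r) A"
      by (simp add: cond emeasure_density)
    finally show "emeasure (distr (density N (indicator D)) borel fst) A = emeasure (density (distr N borel fst) r) A" .
  qed simp
  have "(\<integral>\<^sup>+y. g (fst y) * indicator D y \<partial>N) = (\<integral>\<^sup>+u. g u \<partial>distr (density N (indicator D)) borel fst)"
    by (simp add: nn_integral_distr nn_integral_density mult.commute)
  also have "\<dots> = (\<integral>\<^sup>+y. r (fst y) * g (fst y) \<partial>N)"
    by (simp add: law nn_integral_density nn_integral_distr)
  finally show ?thesis .
qed

locale kernel_score_model = prob_space M for M :: "'a measure" +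
  fixes X :: "nat \<Rightarrow> 'a \<Rightarrow> real^'p"
    and Y :: "nat \<Rightarrow> 'a \<Rightarrow> 'y"
    and MY :: "'y measure"
    and V :: "(real^'p) \<times> 'y \<Rightarrow> real"
    and d :: "real^'p \<Rightarrow> real^'p \<Rightarrow> real"
    and F :: "real^'p \<Rightarrow> real \<Rightarrow> real"
    and L \<beta> :: real
    and h :: "nat \<Rightarrow> real"
  assumes meas_X [measurable]: "\<And>i. X i \<in> borel_measurable M"
    and meas_Y [measurable]: "\<And>i. Y i \<in> M \<rightarrow>\<^sub>M MY"
    and meas_V [measurable]: "V \<in> borel_measurable (borel \<Otimes>\<^sub>M MY)"
    and indep: "prob_space.indep_vars M (\<lambda>_. borel \<Otimes>\<^sub>M MY) (\<lambda>i \<omega>. (X i \<omega>, Y i \<omega>)) {1..}"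
    and ident: "\<And>i. i \<ge> 1 \<Longrightarrow>
        distr M (borel \<Otimes>\<^sub>M MY) (\<lambda>\<omega>. (X i \<omega>, Y i \<omega>)) = distr M (borel \<Otimes>\<^sub>M MY) (\<lambda>\<omega>. (X 1 \<omega>, Y 1 \<omega>))"
    and support: "AE \<omega> in M. X 1 \<omega> \<in> unit_cube"
    and L_pos: "L > 0" and beta_nonneg: "\<beta> \<ge> 0"
    and meas_d: "case_prod d \<in> borel_measurable borel"
    and d_nonneg: "\<And>x x'. x \<in> unit_cube \<Longrightarrow> x' \<in> unit_cube \<Longrightarrow> d x x' \<ge> 0"
    and F_meas [measurable]: "\<And>v. (\<lambda>x. F x v) \<in> borel_measurable borel"
    and F_cdf: "\<And>x. x \<in> unit_cube \<Longrightarrow>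
        mono (F x) \<and> continuous_on UNIV (F x) \<and> (F x \<longlongrightarrow> 0) at_bot \<and> (F x \<longlongrightarrow> 1) at_top"
    and F_cond: "\<And>A v. A \<in> sets borel \<Longrightarrow>
        measure M {\<omega> \<in> space M. X 1 \<omega> \<in> A \<and> V (X 1 \<omega>, Y 1 \<omega>) \<le> v}
          = set_lebesgue_integral (distr M borel (X 1)) A (\<lambda>x. F x v)"
    and lip: "\<And>x x' v. x \<in> unit_cube \<Longrightarrow> x' \<in> unit_cube \<Longrightarrow> \<bar>F x v - F x' v\<bar> \<le> L * d x x'"
    and small_ball: "\<And>n \<epsilon> x0. 0 < \<epsilon> \<Longrightarrow> \<epsilon> \<le> h n \<Longrightarrow> x0 \<in> unit_cube \<Longrightarrow>
        measure M {\<omega> \<in> space M. d x0 (X 1 \<omega>) \<le> \<epsilon>} \<ge> \<epsilon> powr \<beta> / L"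
    and h_pos: "\<And>n. h n > 0"
    and h_lim: "h \<longlonglongrightarrow> 0"
begin

lemma unit_cube_borel [measurable]: "unit_cube \<in> sets borel"
  unfolding unit_cube_def by measurable

lemma measurable_d [measurable (raw)]:
  assumes "f \<in> N \<rightarrow>\<^sub>M borel" "g \<in> N \<rightarrow>\<^sub>M borel"
  shows "(\<lambda>z. d (f z) (g z)) \<in> borel_measurable N"
proof -
  have "(\<lambda>z. (f z, g z)) \<in> N \<rightarrow>\<^sub>M borel" using assms by (simp add: borel_prod[symmetric])
  from measurable_compose[OF this meas_d] show ?thesis by simp
qed

lemma F_bounds: "x \<in> unit_cube \<Longrightarrow> 0 \<le> F x v \<and> F x v \<le> 1"
  using F_cdf cdf_bounds by blast

lemma measurable_Z [measurable]: "(\<lambda>\<omega>. (X i \<omega>, Y i \<omega>)) \<in> M \<rightarrow>\<^sub>M borel \<Otimes>\<^sub>M MY"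
  by measurable

lemma AE_X_in_unit_cube:
  assumes "j \<ge> 1" shows "AE \<omega> in M. X j \<omega> \<in> unit_cube"
proof -
  have "AE z in distr M (borel \<Otimes>\<^sub>M MY) (\<lambda>\<omega>. (X 1 \<omega>, Y 1 \<omega>)). fst z \<in> unit_cube"
    by (subst AE_distr_iff) (use support in auto)
  hence "AE z in distr M (borel \<Otimes>\<^sub>M MY) (\<lambda>\<omega>. (X j \<omega>, Y j \<omega>)). fst z \<in> unit_cube"
    by (simp only: ident[OF assms])
  thus ?thesis by (subst (asm) AE_distr_iff) auto
qed

lemma nn_integral_kernel_exp_le:
  fixes x0 :: "real^'p"
  assumes "j \<ge> 1" "0 < r"
  defines "p \<equiv> prob {\<omega> \<in> space M. d x0 (X 1 \<omega>) \<le> r}"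
  shows "(\<integral>\<^sup>+\<omega>. exp (- exp 1 * ln 2 * kernH d r x0 (X j \<omega>)) \<partial>M) \<le> ennreal (1 - p / 2)"
proof -
  let ?E = "{\<omega> \<in> space M. d x0 (X 1 \<omega>) \<le> r}"
  have "(\<integral>\<^sup>+\<omega>. exp (- exp 1 * ln 2 * kernH d r x0 (X j \<omega>)) \<partial>M)
      = (\<integral>\<^sup>+z. exp (- exp 1 * ln 2 * kernH d r x0 (fst z)) \<partial>distr M (borel \<Otimes>\<^sub>M MY) (\<lambda>\<omega>. (X j \<omega>, Y j \<omega>)))"
    by (simp add: nn_integral_distr kernH_def)
  also have "\<dots> = (\<integral>\<^sup>+\<omega>. exp (- exp 1 * ln 2 * kernH d r x0 (X 1 \<omega>)) \<partial>M)"
    by (simp add: ident[OF assms(1)] nn_integral_distr kernH_def)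
  also have "\<dots> \<le> (\<integral>\<^sup>+\<omega>. ennreal (1 - indicator ?E \<omega> / 2) \<partial>M)"
  proof (intro nn_integral_mono)
    fix \<omega> assume "\<omega> \<in> space M"
    show "ennreal (exp (- exp 1 * ln 2 * kernH d r x0 (X 1 \<omega>))) \<le> ennreal (1 - indicator ?E \<omega> / 2)"
    proof (cases "\<omega> \<in> ?E")
      case True
      hence "exp (-1) \<le> kernH d r x0 (X 1 \<omega>)" using assms(2) by (simp add: kernH_def field_simps)
      hence "ln 2 \<le> exp 1 * ln 2 * kernH d r x0 (X 1 \<omega>)" by (simp add: exp_minus field_simps)
      hence "exp (- exp 1 * ln 2 * kernH d r x0 (X 1 \<omega>)) \<le> exp (- ln 2)" by simp
      also have "\<dots> = 1 - indicator ?E \<omega> / 2" using True by (simp add: exp_minus)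
      finally show ?thesis by (rule ennreal_leI)
    next
      case False
      thus ?thesis by (simp add: kernH_def)
    qed
  qed
  also have "\<dots> = ennreal (expectation (\<lambda>\<omega>. 1 - indicator ?E \<omega> / 2))"
    by (subst nn_integral_eq_integral) (auto simp: indicator_def intro!: integrable_const_bound[where B=1])
  also have "expectation (\<lambda>\<omega>. 1 - indicator ?E \<omega> / 2) = 1 - p / 2"
    unfolding p_def by (subst Bochner_Integration.integral_diff) (auto simp: prob_space emeasure_eq_measure intro!: integrable_divide integrable_real_indicator)
  finally show ?thesis .
qed

lemma prob_kernel_sum_le:
  fixes x0 :: "real^'p"
  assumes "0 < r"
  defines "p \<equiv> prob {\<omega> \<in> space M. d x0 (X 1 \<omega>) \<le> r}"
  shows "prob {\<omega> \<in> space M. (\<Sum>j\<in>{1..n}. kernH d r x0 (X j \<omega>)) \<le> a}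
           \<le> exp (exp 1 * ln 2 * a) * (1 - p / 2) ^ n"
proof -
  define s where "s = exp 1 * ln (2::real)"
  define \<xi> where "\<xi> j \<omega> = kernH d r x0 (X j \<omega>)" for j \<omega>
  have [measurable]: "\<xi> j \<in> borel_measurable M" for j unfolding \<xi>_def kernH_def by measurable
  have p1: "p \<le> 1" by (simp add: p_def)
  have "emeasure M {\<omega> \<in> space M. (\<Sum>j\<in>{1..n}. \<xi> j \<omega>) \<le> a}
      \<le> exp (s * a) * (\<integral>\<^sup>+\<omega>. ennreal (exp (- s * (\<Sum>j\<in>{1..n}. \<xi> j \<omega>))) * indicator (space M) \<omega> \<partial>M)"
    by (rule Chernoff_ineq_nn_integral_le) (auto simp: s_def)
  also have "(\<integral>\<^sup>+\<omega>. ennreal (exp (- s * (\<Sum>j\<in>{1..n}. \<xi> j \<omega>))) * indicator (space M) \<omega> \<partial>M)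
      = (\<integral>\<^sup>+\<omega>. (\<Prod>j\<in>{1..n}. ennreal (exp (- s * \<xi> j \<omega>))) \<partial>M)"
    by (intro nn_integral_cong) (simp add: sum_distrib_left exp_sum prod_ennreal)
  also have "\<dots> = (\<Prod>j\<in>{1..n}. \<integral>\<^sup>+\<omega>. exp (- s * \<xi> j \<omega>) \<partial>M)"
  proof (rule indep_vars_nn_integral)
    have "indep_vars (\<lambda>_. borel \<Otimes>\<^sub>M MY) (\<lambda>i \<omega>. (X i \<omega>, Y i \<omega>)) {1..n}"
      by (rule indep_vars_subset[OF indep]) auto
    from indep_vars_compose2[OF this, of "\<lambda>_ z. ennreal (exp (- s * kernH d r x0 (fst z)))"]
    show "indep_vars (\<lambda>_. borel) (\<lambda>j \<omega>. ennreal (exp (- s * \<xi> j \<omega>))) {1..n}"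
      unfolding \<xi>_def kernH_def by simp
  qed auto
  also have "ennreal (exp (s * a)) * (\<Prod>j\<in>{1..n}. \<integral>\<^sup>+\<omega>. exp (- s * \<xi> j \<omega>) \<partial>M)
      \<le> ennreal (exp (s * a)) * (\<Prod>j\<in>{1..n}. ennreal (1 - p / 2))"
    by (intro mult_left_mono prod_mono_ennreal)
      (use nn_integral_kernel_exp_le[OF _ assms(1)] in \<open>auto simp: s_def \<xi>_def p_def\<close>)
  also have "\<dots> = ennreal (exp (s * a) * (1 - p / 2) ^ n)"
    using p1 by (simp add: prod_ennreal ennreal_mult ennreal_power)
  finally show ?thesis
    using p1 by (simp add: emeasure_eq_measure s_def \<xi>_def)
qed

lemma prob_Bsum_small_le:
  assumes x0: "x0 \<in> unit_cube"
  shows "prob {\<omega> \<in> space M. Bsum d (h n) X n x0 \<omega> \<le> real n * h n powr \<beta> / (2 * exp 1 * L)}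
          \<le> exp (- (real n * h n powr \<beta>) / (8 * L))"
proof -
  define q where "q = h n powr \<beta> / L"
  define a where "a = real n * h n powr \<beta> / (2 * exp 1 * L)"
  define p where "p = prob {\<omega> \<in> space M. d x0 (X 1 \<omega>) \<le> h n}"
  have "q \<le> p" unfolding p_def q_def by (rule small_ball[OF h_pos order_refl x0])
  have "p \<le> 1" by (simp add: p_def)
  have "{\<omega> \<in> space M. Bsum d (h n) X n x0 \<omega> \<le> a}
      \<subseteq> {\<omega> \<in> space M. (\<Sum>j\<in>{1..n}. kernH d (h n) x0 (X j \<omega>)) \<le> a}"
    by (auto simp: Bsum_def kernH_def) (smt (verit) exp_gt_zero)
  hence "prob {\<omega> \<in> space M. Bsum d (h n) X n x0 \<omega> \<le> a}
      \<le> prob {\<omega> \<in> space M. (\<Sum>j\<in>{1..n}. kernH d (h n) x0 (X j \<omega>)) \<le> a}"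
    by (intro finite_measure_mono) (measurable, simp add: kernH_def)
  also have "\<dots> \<le> exp (exp 1 * ln 2 * a) * (1 - p / 2) ^ n"
    unfolding p_def by (rule prob_kernel_sum_le[OF h_pos])
  also have "\<dots> \<le> exp (exp 1 * ln 2 * a) * exp (- q / 2) ^ n"
  proof (intro mult_left_mono power_mono)
    have "1 - p / 2 \<le> exp (- p / 2)" using exp_ge_add_one_self[of "- p / 2"] by simp
    also have "\<dots> \<le> exp (- q / 2)" using \<open>q \<le> p\<close> by simp
    finally show "1 - p / 2 \<le> exp (- q / 2)" .
  qed (use \<open>p \<le> 1\<close> in auto)
  also have "\<dots> = exp (real n * q * (ln 2 - 1) / 2)"
    using L_pos by (simp add: a_def q_def exp_of_nat_mult[symmetric] exp_add[symmetric] field_simps)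
  also have "\<dots> \<le> exp (- (real n * h n powr \<beta>) / (8 * L))"
  proof -
    have "real n * q * (ln 2 - 1) \<le> real n * q * (- 1 / 4)"
      using ln_2_le_3_4 L_pos by (intro mult_left_mono) (auto simp: q_def)
    moreover have "- (real n * h n powr \<beta>) / (8 * L) = - (real n * q) / 8" by (simp add: q_def)
    ultimately show ?thesis by simp
  qed
  finally show ?thesis by (simp add: a_def)
qed

lemma cdf_gap_bounds:
  assumes "x \<in> unit_cube" "x0 \<in> unit_cube"
  shows "cdf_gap F x x0 \<le> L * d x0 x \<and> cdf_gap F x x0 \<le> 1"
proof
  show "cdf_gap F x x0 \<le> L * d x0 x"
    using lip[OF assms(2,1)] by (intro cdf_gap_le) (simp add: abs_minus_commute)
  show "cdf_gap F x x0 \<le> 1"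
  proof (rule cdf_gap_le)
    fix v show "\<bar>F x v - F x0 v\<bar> \<le> 1"
      using F_bounds[OF assms(1), of v] F_bounds[OF assms(2), of v] by (auto simp: abs_le_iff)
  qed
qed

lemma Delta_ratio_bound:
  "\<exists>C>0. \<exists>N. \<forall>n\<ge>N. \<forall>x0\<in>unit_cube. AE \<omega> in M.
      Delta_sum d (h n) F X n x0 \<omega> / max (Bsum d (h n) X n x0 \<omega>) (real n * h n powr \<beta>)
        \<le> C * h n * ln (1 / h n)"
proof -
  obtain N where N: "\<And>n. n \<ge> N \<Longrightarrow> h n < exp (-1)"
    using order_tendstoD(2)[OF h_lim, of "exp (-1)"] by (auto simp: eventually_sequentially)
  have "L * (1 + \<beta>) + 1 > 0" using L_pos beta_nonneg by (simp add: add_pos_nonneg)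
  moreover have "AE \<omega> in M. Delta_sum d (h n) F X n x0 \<omega> / max (Bsum d (h n) X n x0 \<omega>) (real n * h n powr \<beta>)
      \<le> (L * (1 + \<beta>) + 1) * h n * ln (1 / h n)" if n: "n \<ge> max N 1" and x0: "x0 \<in> unit_cube" for n x0
  proof -
    have "AE \<omega> in M. \<forall>j\<in>{1..n}. X j \<omega> \<in> unit_cube"
      by (rule AE_finite_allI) (auto intro: AE_X_in_unit_cube)
    thus ?thesis
    proof (rule AE_mp, intro AE_I2 impI)
      fix \<omega> assume "\<forall>j\<in>{1..n}. X j \<omega> \<in> unit_cube"
      thus "Delta_sum d (h n) F X n x0 \<omega> / max (Bsum d (h n) X n x0 \<omega>) (real n * h n powr \<beta>)
          \<le> (L * (1 + \<beta>) + 1) * h n * ln (1 / h n)"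
        unfolding Delta_sum_def Bsum_def kernH_def
        using kernel_gap_ratio_le[of n "h n" L \<beta> "\<lambda>i. cdf_gap F (X i \<omega>) x0" "\<lambda>i. d x0 (X i \<omega>)"]
          n N[of n] h_pos[of n] L_pos beta_nonneg cdf_gap_bounds[OF _ x0] by auto
    qed
  qed
  ultimately show ?thesis by blast
qed

definition \<nu> :: "((real^'p) \<times> 'y) measure"
  where "\<nu> = distr M (borel \<Otimes>\<^sub>M MY) (\<lambda>\<omega>. (X 1 \<omega>, Y 1 \<omega>))"

lemma sets_nu [measurable_cong]: "sets \<nu> = sets (borel \<Otimes>\<^sub>M MY)"
  by (simp add: \<nu>_def)

lemma prob_space_nu: "prob_space \<nu>"
  unfolding \<nu>_def by (rule prob_space_distr) measurable

lemma distr_fst_nu: "distr \<nu> borel fst = distr M borel (X 1)"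
proof -
  have "distr \<nu> borel fst = distr M borel (fst \<circ> (\<lambda>\<omega>. (X 1 \<omega>, Y 1 \<omega>)))"
    unfolding \<nu>_def by (rule distr_distr) measurable
  thus ?thesis by (simp add: comp_def)
qed

lemma measurable_sample [measurable]:
  "(\<lambda>\<omega>. \<lambda>j\<in>I. (X j \<omega>, Y j \<omega>)) \<in> M \<rightarrow>\<^sub>M PiM I (\<lambda>_. \<nu>)"
  by (rule measurable_restrict) (simp add: measurable_cong_sets[OF refl sets_nu])

lemma distr_sample:
  assumes "finite I" "I \<noteq> {}" "I \<subseteq> {1..}"
  shows "distr M (PiM I (\<lambda>_. \<nu>)) (\<lambda>\<omega>. \<lambda>j\<in>I. (X j \<omega>, Y j \<omega>)) = PiM I (\<lambda>_. \<nu>)"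
proof -
  have "indep_vars (\<lambda>_. borel \<Otimes>\<^sub>M MY) (\<lambda>i \<omega>. (X i \<omega>, Y i \<omega>)) I"
    by (rule indep_vars_subset[OF indep assms(3)])
  hence "distr M (PiM I (\<lambda>_. borel \<Otimes>\<^sub>M MY)) (\<lambda>\<omega>. \<lambda>j\<in>I. (X j \<omega>, Y j \<omega>))
      = PiM I (\<lambda>j. distr M (borel \<Otimes>\<^sub>M MY) (\<lambda>\<omega>. (X j \<omega>, Y j \<omega>)))"
    by (subst (asm) indep_vars_iff_distr_eq_PiM'[OF assms(2)]) simp_all
  also have "\<dots> = PiM I (\<lambda>_. \<nu>)"
  proof (rule PiM_cong)
    fix j assume "j \<in> I"
    with assms(3) show "distr M (borel \<Otimes>\<^sub>M MY) (\<lambda>\<omega>. (X j \<omega>, Y j \<omega>)) = \<nu>"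
      unfolding \<nu>_def by (intro ident) auto
  qed simp
  moreover have "distr M (PiM I (\<lambda>_. \<nu>)) (\<lambda>\<omega>. \<lambda>j\<in>I. (X j \<omega>, Y j \<omega>))
      = distr M (PiM I (\<lambda>_. borel \<Otimes>\<^sub>M MY)) (\<lambda>\<omega>. \<lambda>j\<in>I. (X j \<omega>, Y j \<omega>))"
    by (rule distr_cong[OF refl _ refl]) (rule sets_PiM_cong; simp add: sets_nu)
  ultimately show ?thesis by simp
qed

text \<open>\<open>F\<close> is only known to be measurable in \<open>x\<close>, and a continuous cdf in \<open>v\<close> for \<open>x\<close> in the cube;
  cut off outside the cube it is jointly measurable.\<close>
definition F_cube :: "real^'p \<Rightarrow> real \<Rightarrow> real"
  where "F_cube x v = (if x \<in> unit_cube then F x v else 0)"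

lemma F_cube_bounds: "0 \<le> F_cube x v" "F_cube x v \<le> 1"
  using F_bounds[of x v] by (auto simp: F_cube_def)

lemma isCont_F_cube:
  assumes "x \<in> unit_cube" shows "isCont (F_cube x) v"
proof -
  have "F_cube x = F x" using assms by (auto simp: F_cube_def)
  thus ?thesis using F_cdf[OF assms] by (simp add: continuous_on_eq_continuous_at)
qed

lemma measurable_F_cube_fst [measurable]: "(\<lambda>x. F_cube x v) \<in> borel_measurable borel"
  unfolding F_cube_def using F_meas[of v] by measurable

text \<open>Pointwise limit of the jointly measurable functions obtained by rounding \<open>v\<close> up to the
  grid \<open>\<int> / (m + 1)\<close>.\<close>
lemma F_cube_measurable_pair: "(\<lambda>p. F_cube (fst p) (snd p)) \<in> borel_measurable (borel \<Otimes>\<^sub>M borel)"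
proof (rule borel_measurable_LIMSEQ_real)
  define u where "u = (\<lambda>m (p :: (real^'p) \<times> real).
      F_cube (fst p) (real_of_int \<lceil>real (Suc m) * snd p\<rceil> / real (Suc m)))"
  show "u m \<in> borel_measurable (borel \<Otimes>\<^sub>M borel)" for m
  proof -
    have "(\<lambda>p. (\<lambda>(k::int) p. F_cube (fst p) (real_of_int k / real (Suc m))) \<lceil>real (Suc m) * snd p\<rceil> p)
        \<in> borel_measurable (borel \<Otimes>\<^sub>M borel)"
      by (rule measurable_compose_countable'[where I=UNIV]) auto
    thus ?thesis by (simp add: u_def)
  qed
  fix p :: "(real^'p) \<times> real"
  obtain x v where p: "p = (x, v)" by (cases p)
  have grid: "(\<lambda>m. real_of_int \<lceil>real (Suc m) * v\<rceil> / real (Suc m)) \<longlonglongrightarrow> v"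
  proof (rule tendsto_sandwich[of "\<lambda>_. v" _ _ "\<lambda>m. v + inverse (real (Suc m))"])
    show "\<forall>\<^sub>F m in sequentially. real_of_int \<lceil>real (Suc m) * v\<rceil> / real (Suc m) \<le> v + inverse (real (Suc m))"
    proof (intro always_eventually allI)
      fix m
      have "real_of_int \<lceil>real (Suc m) * v\<rceil> \<le> real (Suc m) * v + 1" by linarith
      thus "real_of_int \<lceil>real (Suc m) * v\<rceil> / real (Suc m) \<le> v + inverse (real (Suc m))"
        by (simp add: field_simps del: of_nat_Suc)
    qed
    show "(\<lambda>m. v + inverse (real (Suc m))) \<longlonglongrightarrow> v"
      using tendsto_add[OF tendsto_const LIMSEQ_inverse_real_of_nat, of v] by simp
    show "\<forall>\<^sub>F m in sequentially. v \<le> real_of_int \<lceil>real (Suc m) * v\<rceil> / real (Suc m)"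
      by (intro always_eventually allI) (simp add: field_simps)
  qed simp
  show "(\<lambda>m. u m p) \<longlonglongrightarrow> F_cube (fst p) (snd p)"
  proof (cases "x \<in> unit_cube")
    case True
    show ?thesis unfolding u_def p fst_conv snd_conv by (rule isCont_tendsto_compose[OF isCont_F_cube[OF True] grid])
  qed (simp add: u_def p F_cube_def)
qed

lemma measurable_F_cube [measurable (raw)]:
  assumes "f \<in> N \<rightarrow>\<^sub>M borel" "g \<in> N \<rightarrow>\<^sub>M borel"
  shows "(\<lambda>z. F_cube (f z) (g z)) \<in> borel_measurable N"
  using measurable_compose[OF measurable_Pair[OF assms] F_cube_measurable_pair] by simp

lemma prob_X_V_le_tendsto:
  assumes [measurable]: "A \<in> sets borel" and v': "v' \<longlonglongrightarrow> v" "incseq v'" "\<And>k. v' k < v"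
  shows "(\<lambda>k. prob {\<omega> \<in> space M. X 1 \<omega> \<in> A \<and> V (X 1 \<omega>, Y 1 \<omega>) \<le> v' k})
           \<longlonglongrightarrow> prob {\<omega> \<in> space M. X 1 \<omega> \<in> A \<and> V (X 1 \<omega>, Y 1 \<omega>) < v}"
proof -
  define S where "S k = {\<omega> \<in> space M. X 1 \<omega> \<in> A \<and> V (X 1 \<omega>, Y 1 \<omega>) \<le> v' k}" for k
  have "S k \<in> events" for k unfolding S_def by measurable
  hence "range S \<subseteq> events" by blast
  moreover have "incseq S"
    using v'(2) by (auto simp: incseq_def S_def intro: order_trans)
  ultimately have "(\<lambda>k. prob (S k)) \<longlonglongrightarrow> prob (\<Union>k. S k)"
    by (rule finite_Lim_measure_incseq)
  also have "(\<Union>k. S k) = {\<omega> \<in> space M. X 1 \<omega> \<in> A \<and> V (X 1 \<omega>, Y 1 \<omega>) < v}"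
  proof (intro equalityI subsetI)
    fix \<omega> assume "\<omega> \<in> {\<omega> \<in> space M. X 1 \<omega> \<in> A \<and> V (X 1 \<omega>, Y 1 \<omega>) < v}"
    moreover from this obtain k where "V (X 1 \<omega>, Y 1 \<omega>) < v' k"
      using order_tendstoD(1)[OF v'(1), of "V (X 1 \<omega>, Y 1 \<omega>)"] by (auto simp: eventually_sequentially)
    ultimately show "\<omega> \<in> (\<Union>k. S k)" by (auto simp: S_def intro: less_imp_le)
  qed (auto simp: S_def intro: le_less_trans[OF _ v'(3)])
  finally show ?thesis unfolding S_def .
qed

lemma prob_X_V_less:
  assumes A[measurable]: "A \<in> sets borel"
  shows "prob {\<omega> \<in> space M. X 1 \<omega> \<in> A \<and> V (X 1 \<omega>, Y 1 \<omega>) < v}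
       = (\<integral>x. indicator A x * F_cube x v \<partial>distr M borel (X 1))"
proof -
  interpret law: prob_space "distr M borel (X 1)" by (rule prob_space_distr) simp
  define v' where "v' k = v - inverse (real (Suc k))" for k
  have v': "v' \<longlonglongrightarrow> v" "incseq v'" "\<And>k. v' k < v"
    unfolding v'_def using tendsto_diff[OF tendsto_const LIMSEQ_inverse_real_of_nat, of v]
    by (auto simp: incseq_def field_simps)
  have AE_cube: "AE x in distr M borel (X 1). x \<in> unit_cube"
    by (subst AE_distr_iff) (use support in auto)
  have "(\<lambda>k. prob {\<omega> \<in> space M. X 1 \<omega> \<in> A \<and> V (X 1 \<omega>, Y 1 \<omega>) \<le> v' k})
      = (\<lambda>k. \<integral>x. indicator A x * F_cube x (v' k) \<partial>distr M borel (X 1))"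
    unfolding F_cond[OF A] set_lebesgue_integral_def
    by (intro ext integral_cong_AE) (use AE_cube in \<open>auto simp: F_cube_def\<close>)
  with prob_X_V_le_tendsto[OF A v'] have "(\<lambda>k. \<integral>x. indicator A x * F_cube x (v' k) \<partial>distr M borel (X 1))
      \<longlonglongrightarrow> prob {\<omega> \<in> space M. X 1 \<omega> \<in> A \<and> V (X 1 \<omega>, Y 1 \<omega>) < v}" by simp
  moreover have "(\<lambda>k. \<integral>x. indicator A x * F_cube x (v' k) \<partial>distr M borel (X 1))
      \<longlonglongrightarrow> (\<integral>x. indicator A x * F_cube x v \<partial>distr M borel (X 1))"
  proof (rule integral_dominated_convergence[where w="\<lambda>_. 1"])
    show "AE x in distr M borel (X 1). (\<lambda>k. indicator A x * F_cube x (v' k)) \<longlonglongrightarrow> indicator A x * F_cube x v"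
      using AE_cube by eventually_elim
        (intro tendsto_mult tendsto_const isCont_tendsto_compose[OF isCont_F_cube v'(1)])
    show "AE x in distr M borel (X 1). norm (indicator A x * F_cube x (v' k)) \<le> 1" for k
      using F_cube_bounds by (auto simp: indicator_def)
    show "integrable (distr M borel (X 1)) (\<lambda>_. 1 :: real)" by (rule law.integrable_const)
  qed auto
  ultimately show ?thesis by (rule LIMSEQ_unique)
qed

lemma prob_X_V_ge:
  assumes A[measurable]: "A \<in> sets borel"
  shows "prob {\<omega> \<in> space M. X 1 \<omega> \<in> A \<and> \<not> V (X 1 \<omega>, Y 1 \<omega>) < v}
       = (\<integral>x. indicator A x * (1 - F_cube x v) \<partial>distr M borel (X 1))"
proof -
  interpret law: prob_space "distr M borel (X 1)" by (rule prob_space_distr) simp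
  have eq: "{\<omega> \<in> space M. X 1 \<omega> \<in> A \<and> \<not> V (X 1 \<omega>, Y 1 \<omega>) < v}
      = {\<omega> \<in> space M. X 1 \<omega> \<in> A} - {\<omega> \<in> space M. X 1 \<omega> \<in> A \<and> V (X 1 \<omega>, Y 1 \<omega>) < v}" by auto
  have m1: "{\<omega> \<in> space M. X 1 \<omega> \<in> A} \<in> events" by measurable
  have m2: "{\<omega> \<in> space M. X 1 \<omega> \<in> A \<and> V (X 1 \<omega>, Y 1 \<omega>) < v} \<in> events" by measurable
  have "prob {\<omega> \<in> space M. X 1 \<omega> \<in> A \<and> \<not> V (X 1 \<omega>, Y 1 \<omega>) < v}
      = prob {\<omega> \<in> space M. X 1 \<omega> \<in> A} - prob {\<omega> \<in> space M. X 1 \<omega> \<in> A \<and> V (X 1 \<omega>, Y 1 \<omega>) < v}"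
    unfolding eq by (rule finite_measure_Diff[OF m1 m2]) auto
  also have "prob {\<omega> \<in> space M. X 1 \<omega> \<in> A} = (\<integral>x. indicator A x \<partial>distr M borel (X 1))"
  proof -
    have "(\<integral>x. indicator A x \<partial>distr M borel (X 1)) = measure M (X 1 -` A \<inter> space M)"
      using sets.sets_into_space[OF A] by (simp add: Int_absorb2 measure_distr)
    also have "X 1 -` A \<inter> space M = {\<omega> \<in> space M. X 1 \<omega> \<in> A}" by auto
    finally show ?thesis by simp
  qed
  also have "(\<integral>x. indicator A x \<partial>distr M borel (X 1)) - prob {\<omega> \<in> space M. X 1 \<omega> \<in> A \<and> V (X 1 \<omega>, Y 1 \<omega>) < v}
      = (\<integral>x. indicator A x * (1 - F_cube x v) \<partial>distr M borel (X 1))"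
  proof -
    have "integrable (distr M borel (X 1)) (\<lambda>x. indicator A x :: real)"
      by (rule law.integrable_const_bound[where B=1]) (auto simp: indicator_def)
    moreover have "integrable (distr M borel (X 1)) (\<lambda>x. indicator A x * F_cube x v)"
      by (rule law.integrable_const_bound[where B=1]) (auto simp: indicator_def F_cube_bounds)
    ultimately show ?thesis
      unfolding prob_X_V_less[OF A] right_diff_distrib mult_1_right
      by (rule Bochner_Integration.integral_diff[symmetric])
  qed
  finally show ?thesis .
qed

lemma nn_integral_fst_mult_indicator_nu:
  fixes g :: "real^'p \<Rightarrow> ennreal" and r :: "real^'p \<Rightarrow> real"
  assumes [measurable]: "Measurable.pred \<nu> P" "r \<in> borel_measurable borel" "g \<in> borel_measurable borel"
    and r: "\<And>x. 0 \<le> r x" "\<And>x. r x \<le> 1"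
    and cond_prob: "\<And>A. A \<in> sets borel \<Longrightarrow> prob {\<omega> \<in> space M. X 1 \<omega> \<in> A \<and> P (X 1 \<omega>, Y 1 \<omega>)}
        = (\<integral>x. indicator A x * r x \<partial>distr M borel (X 1))"
  shows "(\<integral>\<^sup>+y. g (fst y) * indicator {y \<in> space \<nu>. P y} y \<partial>\<nu>) = (\<integral>\<^sup>+y. ennreal (r (fst y)) * g (fst y) \<partial>\<nu>)"
proof (rule nn_integral_fst_mult_indicator)
  interpret law: prob_space "distr M borel (X 1)" by (rule prob_space_distr) simp
  fix A :: "(real^'p) set" assume A[measurable]: "A \<in> sets borel"
  have "{y \<in> space \<nu>. fst y \<in> A} \<inter> {y \<in> space \<nu>. P y} = {y \<in> space \<nu>. fst y \<in> A \<and> P y}" by auto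
  moreover have "{y \<in> space \<nu>. fst y \<in> A \<and> P y} \<in> sets \<nu>" by measurable
  ultimately have "emeasure \<nu> ({y \<in> space \<nu>. fst y \<in> A} \<inter> {y \<in> space \<nu>. P y})
      = emeasure M {\<omega> \<in> space M. X 1 \<omega> \<in> A \<and> P (X 1 \<omega>, Y 1 \<omega>)}"
    unfolding \<nu>_def using measurable_space[OF measurable_Z[of 1]]
    by (subst emeasure_distr) (auto simp: \<nu>_def intro!: arg_cong[where f="emeasure M"])
  also have "\<dots> = ennreal (\<integral>x. indicator A x * r x \<partial>distr M borel (X 1))"
    using cond_prob[OF A] by (simp add: emeasure_eq_measure)
  also have "\<dots> = (\<integral>\<^sup>+x. ennreal (indicator A x * r x) \<partial>distr M borel (X 1))"
  proof (rule nn_integral_eq_integral[symmetric])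
    show "integrable (distr M borel (X 1)) (\<lambda>x. indicator A x * r x)"
      by (rule law.integrable_const_bound[where B=1]) (use r in \<open>auto simp: indicator_def\<close>)
  qed (use r in auto)
  also have "\<dots> = (\<integral>\<^sup>+x. ennreal (r x) * indicator A x \<partial>distr \<nu> borel fst)"
    unfolding distr_fst_nu by (intro nn_integral_cong) (auto simp: indicator_def)
  finally show "emeasure \<nu> ({y \<in> space \<nu>. fst y \<in> A} \<inter> {y \<in> space \<nu>. P y})
      = (\<integral>\<^sup>+x. ennreal (r x) * indicator A x \<partial>distr \<nu> borel fst)" .
qed measurable

lemma nn_integral_split_V_less:
  fixes a1 a0 :: "real^'p \<Rightarrow> ennreal"
  assumes [measurable]: "a1 \<in> borel_measurable borel" "a0 \<in> borel_measurable borel"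
  shows "(\<integral>\<^sup>+y. a1 (fst y) * indicator {y \<in> space \<nu>. V y < v} y
              + a0 (fst y) * indicator {y \<in> space \<nu>. \<not> V y < v} y \<partial>\<nu>)
       = (\<integral>\<^sup>+y. ennreal (F_cube (fst y) v) * a1 (fst y) + ennreal (1 - F_cube (fst y) v) * a0 (fst y) \<partial>\<nu>)"
proof -
  have "(\<integral>\<^sup>+y. a1 (fst y) * indicator {y \<in> space \<nu>. V y < v} y \<partial>\<nu>)
      = (\<integral>\<^sup>+y. ennreal (F_cube (fst y) v) * a1 (fst y) \<partial>\<nu>)"
    by (rule nn_integral_fst_mult_indicator_nu)
      (measurable, measurable, measurable, simp add: F_cube_bounds, simp add: F_cube_bounds, rule prob_X_V_less)
  moreover have "(\<integral>\<^sup>+y. a0 (fst y) * indicator {y \<in> space \<nu>. \<not> V y < v} y \<partial>\<nu>)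
      = (\<integral>\<^sup>+y. ennreal (1 - F_cube (fst y) v) * a0 (fst y) \<partial>\<nu>)"
    by (rule nn_integral_fst_mult_indicator_nu)
      (measurable, measurable, measurable, simp add: F_cube_bounds, simp add: F_cube_bounds, rule prob_X_V_ge)
  ultimately show ?thesis by (simp add: nn_integral_add)
qed

lemma nn_integral_cond_hoeffding:
  fixes W t :: "real^'p \<Rightarrow> real"
  assumes [measurable]: "W \<in> borel_measurable borel" "t \<in> borel_measurable borel"
    and W: "\<And>x. W x \<ge> 0"
  shows "(\<integral>\<^sup>+y. ennreal (W (fst y) * exp (t (fst y) * ((if V y < v then 1 else 0) - F_cube (fst y) v))) \<partial>\<nu>)
       \<le> (\<integral>\<^sup>+y. ennreal (W (fst y) * exp ((t (fst y))\<^sup>2 / 8)) \<partial>\<nu>)"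
proof -
  define a1 where "a1 x = ennreal (W x * exp (t x * (1 - F_cube x v)))" for x
  define a0 where "a0 x = ennreal (W x * exp (- t x * F_cube x v))" for x
  have [measurable]: "a1 \<in> borel_measurable borel" "a0 \<in> borel_measurable borel"
    unfolding a1_def a0_def by measurable
  have "(\<integral>\<^sup>+y. ennreal (W (fst y) * exp (t (fst y) * ((if V y < v then 1 else 0) - F_cube (fst y) v))) \<partial>\<nu>)
      = (\<integral>\<^sup>+y. a1 (fst y) * indicator {y \<in> space \<nu>. V y < v} y
              + a0 (fst y) * indicator {y \<in> space \<nu>. \<not> V y < v} y \<partial>\<nu>)"
    by (intro nn_integral_cong) (auto simp: a1_def a0_def indicator_def)
  also have "\<dots> = (\<integral>\<^sup>+y. ennreal (F_cube (fst y) v) * a1 (fst y) + ennreal (1 - F_cube (fst y) v) * a0 (fst y) \<partial>\<nu>)"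
    by (rule nn_integral_split_V_less) measurable
  also have "\<dots> \<le> (\<integral>\<^sup>+y. ennreal (W (fst y) * exp ((t (fst y))\<^sup>2 / 8)) \<partial>\<nu>)"
  proof (intro nn_integral_mono)
    fix y :: "(real^'p) \<times> 'y"
    define x where "x = fst y"
    define p where "p = F_cube x v"
    have p: "0 \<le> p" "p \<le> 1" using F_cube_bounds by (auto simp: p_def)
    have "ennreal p * a1 x + ennreal (1 - p) * a0 x
        = ennreal (p * (W x * exp (t x * (1 - p))) + (1 - p) * (W x * exp (- t x * p)))"
      unfolding a1_def a0_def p_def[symmetric] using p W[of x]
      by (simp add: ennreal_mult[symmetric] ennreal_plus[symmetric] del: ennreal_plus)
    also have "p * (W x * exp (t x * (1 - p))) + (1 - p) * (W x * exp (- t x * p))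
        = W x * (p * exp (t x * (1 - p)) + (1 - p) * exp (- t x * p))" by (simp add: algebra_simps)
    also have "\<dots> \<le> ennreal (W x * exp ((t x)\<^sup>2 / 8))"
      by (intro ennreal_leI mult_left_mono hoeffding_two_point p W)
    finally show "ennreal (F_cube (fst y) v) * a1 (fst y) + ennreal (1 - F_cube (fst y) v) * a0 (fst y)
        \<le> ennreal (W (fst y) * exp ((t (fst y))\<^sup>2 / 8))" by (simp add: p_def x_def)
  qed
  finally show ?thesis .
qed

end

locale kernel_score_tail = kernel_score_model M X Y MY V d F L \<beta> h
  for M :: "'a measure"
    and X :: "nat \<Rightarrow> 'a \<Rightarrow> real^'p"
    and Y :: "nat \<Rightarrow> 'a \<Rightarrow> 'y"
    and MY :: "'y measure"
    and V :: "(real^'p) \<times> 'y \<Rightarrow> real"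
    and d :: "real^'p \<Rightarrow> real^'p \<Rightarrow> real"
    and F :: "real^'p \<Rightarrow> real \<Rightarrow> real"
    and L \<beta> :: real
    and h :: "nat \<Rightarrow> real" +
  fixes n i :: nat and S :: "((nat \<Rightarrow> real^'p) \<times> real) set"
  assumes n_ge_2: "n \<ge> 2" and i: "i \<in> {1..n+1}"
    and S: "S \<in> sets (PiM {1..n+1} (\<lambda>_. borel) \<Otimes>\<^sub>M borel)"
begin

definition "I = {1..n+1}"
definition "J = {1..n} - {i}"

definition wt :: "(nat \<Rightarrow> real^'p) \<Rightarrow> nat \<Rightarrow> real"
  where "wt xs k = kernH d (h n) (xs i) (xs k)"
definition "wsum xs = (\<Sum>k\<in>I. wt xs k)"
definition "nwt xs k = wt xs k / wsum xs"
definition "thr xs = sqrt (ln (real n) / wsum xs)"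
definition "nwt_sq xs = (\<Sum>k\<in>J. (nwt xs k)\<^sup>2)"
definition "lam xs = 4 * thr xs / nwt_sq xs"

text \<open>\<open>mgf_rest \<sigma> K {}\<close> is the Chernoff integrand for \<open>\<sigma> * resid \<ge> thr\<close> in which the factors of the
  coordinates in \<open>K\<close> have already been replaced by Hoeffding's bound; \<open>lam\<close> minimises the
  resulting exponent \<open>- lam * thr + lam^2 * nwt_sq / 8\<close>.\<close>
definition mgf_factor :: "real \<Rightarrow> nat set \<Rightarrow> (nat \<Rightarrow> real^'p) \<Rightarrow> (nat \<Rightarrow> real) \<Rightarrow> real \<Rightarrow> nat \<Rightarrow> real"
  where "mgf_factor \<sigma> K xs bs v k = (if k \<in> K then exp ((lam xs * nwt xs k)\<^sup>2 / 8)
     else exp (\<sigma> * lam xs * nwt xs k * (bs k - F_cube (xs k) v)))"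
definition "mgf_rest \<sigma> K E xs bs v =
  indicator S (restrict xs I, v) * exp (- lam xs * thr xs) * (\<Prod>k\<in>J-E. mgf_factor \<sigma> K xs bs v k)"

definition "PP = PiM I (\<lambda>_. \<nu>)"
definition covs :: "(nat \<Rightarrow> (real^'p) \<times> 'y) \<Rightarrow> nat \<Rightarrow> real^'p"
  where "covs z k = (if k \<in> I then fst (z k) else 0)"
definition "score z = V (z i)"
definition "below z k = (if k \<in> I \<and> V (z k) < score z then 1 else (0::real))"
definition "resid z = (\<Sum>k\<in>J. nwt (covs z) k * (below z k - F_cube (covs z k) (score z)))"
definition "sample_mgf \<sigma> K z = mgf_rest \<sigma> K {} (covs z) (below z) (score z)"

lemma i_in_I: "i \<in> I" using i by (simp add: I_def)
lemma finite_I: "finite I" by (simp add: I_def)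
lemma finite_J: "finite J" by (simp add: J_def)
lemma J_subset_I: "J \<subseteq> I" by (auto simp: J_def I_def)
lemma S_measurable [measurable]: "S \<in> sets (PiM I (\<lambda>_. borel) \<Otimes>\<^sub>M borel)" using S by (simp add: I_def)

lemma J_nonempty: "J \<noteq> {}"
proof -
  have "(if i = 1 then 2 else 1) \<in> J" using n_ge_2 by (auto simp: J_def)
  thus ?thesis by blast
qed

lemma measurable_mgf_rest [measurable (raw)]:
  assumes [measurable]: "f \<in> N \<rightarrow>\<^sub>M PiM UNIV (\<lambda>_. borel)" "g \<in> N \<rightarrow>\<^sub>M PiM UNIV (\<lambda>_. borel)" "w \<in> N \<rightarrow>\<^sub>M borel"
  shows "(\<lambda>x. mgf_rest \<sigma> K E (f x) (g x) (w x)) \<in> borel_measurable N"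
  unfolding mgf_rest_def mgf_factor_def lam_def thr_def nwt_sq_def nwt_def wsum_def wt_def kernH_def
  by measurable

lemma measurable_lam_nwt [measurable (raw)]:
  assumes [measurable]: "f \<in> N \<rightarrow>\<^sub>M PiM UNIV (\<lambda>_. borel)"
  shows "(\<lambda>x. lam (f x) * nwt (f x) j) \<in> borel_measurable N"
  unfolding lam_def thr_def nwt_sq_def nwt_def wsum_def wt_def kernH_def by measurable

lemma measurable_component_PP [measurable (raw)]:
  "k \<in> I \<Longrightarrow> (\<lambda>z. z k) \<in> PiM I (\<lambda>_. \<nu>) \<rightarrow>\<^sub>M (borel \<Otimes>\<^sub>M MY)"
  using measurable_component_singleton[of k I "\<lambda>_. \<nu>"] by (simp add: measurable_cong_sets[OF refl sets_nu])

lemma measurable_covs [measurable]: "covs \<in> PP \<rightarrow>\<^sub>M PiM UNIV (\<lambda>_. borel)"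
  unfolding PP_def
proof (rule measurable_PiM_single')
  fix k show "(\<lambda>z. covs z k) \<in> borel_measurable (Pi\<^sub>M I (\<lambda>_. \<nu>))"
    unfolding covs_def by (cases "k \<in> I") auto
qed (auto simp: covs_def)

lemma measurable_score [measurable]: "score \<in> borel_measurable PP"
  unfolding score_def PP_def using i_in_I by measurable

lemma measurable_below [measurable]: "below \<in> PP \<rightarrow>\<^sub>M PiM UNIV (\<lambda>_. borel)"
  unfolding PP_def
proof (rule measurable_PiM_single')
  fix k show "(\<lambda>z. below z k) \<in> borel_measurable (Pi\<^sub>M I (\<lambda>_. \<nu>))"
    unfolding below_def score_def using i_in_I by (cases "k \<in> I") auto
qed (auto simp: below_def)

lemma measurable_sample_mgf [measurable]: "sample_mgf \<sigma> K \<in> borel_measurable PP"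
  unfolding sample_mgf_def by measurable

lemma measurable_resid [measurable]: "resid \<in> borel_measurable PP"
  unfolding resid_def nwt_def wsum_def wt_def kernH_def by measurable

lemma measurable_thr_covs [measurable]: "(\<lambda>z. thr (covs z)) \<in> borel_measurable PP"
  unfolding thr_def wsum_def wt_def kernH_def by measurable

lemma pred_thr_le_resid [measurable]: "Measurable.pred PP (\<lambda>z. thr (covs z) \<le> c * resid z)"
  unfolding pred_def by (rule borel_measurable_le) measurable

lemma pred_thr_le_abs_resid [measurable]: "Measurable.pred PP (\<lambda>z. thr (covs z) \<le> \<bar>resid z\<bar>)"
  unfolding pred_def by (rule borel_measurable_le) measurable

lemma measurable_fun_upd [measurable]: "(\<lambda>u. xs(j := u)) \<in> borel \<rightarrow>\<^sub>M PiM UNIV (\<lambda>_. borel)"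
  by (rule measurable_PiM_single') auto

lemma wt_pos: "wt xs k > 0" by (simp add: wt_def kernH_def)

lemma wsum_pos: "wsum xs > 0"
  unfolding wsum_def using finite_I i_in_I by (intro sum_pos) (auto intro: wt_pos)

lemma thr_nonneg: "thr xs \<ge> 0"
  unfolding thr_def using wsum_pos[of xs] n_ge_2 by simp

lemma lam_nonneg: "lam xs \<ge> 0"
  unfolding lam_def nwt_sq_def using thr_nonneg[of xs] by (simp add: sum_nonneg)

lemma mgf_rest_nonneg: "mgf_rest \<sigma> K E xs bs v \<ge> 0"
  unfolding mgf_rest_def by (intro mult_nonneg_nonneg prod_nonneg) (auto simp: mgf_factor_def)

lemma mgf_rest_remove:
  assumes "j \<in> J"
  shows "mgf_rest \<sigma> K {} xs bs v = mgf_rest \<sigma> K {j} xs bs v * mgf_factor \<sigma> K xs bs v j"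
  using assms finite_J by (simp add: mgf_rest_def prod.remove mult_ac)

lemma mgf_rest_insert: "mgf_rest \<sigma> (insert j K) {j} = mgf_rest \<sigma> K {j}"
  unfolding mgf_rest_def mgf_factor_def by (intro ext arg_cong2[where f="(*)"] refl prod.cong) auto

lemma mgf_rest_upd: "mgf_rest \<sigma> K {j} xs (bs(j := b)) v = mgf_rest \<sigma> K {j} xs bs v"
  unfolding mgf_rest_def mgf_factor_def by (intro arg_cong2[where f="(*)"] refl prod.cong) auto

lemma sample_mgf_empty:
  "sample_mgf \<sigma> {} z = indicator S (restrict (covs z) I, score z) * exp (lam (covs z) * (\<sigma> * resid z - thr (covs z)))"
proof -
  have "(\<Prod>k\<in>J. mgf_factor \<sigma> {} (covs z) (below z) (score z) k) = exp (\<sigma> * lam (covs z) * resid z)"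
    by (simp add: mgf_factor_def resid_def exp_sum[OF finite_J] sum_distrib_left mult_ac)
  thus ?thesis unfolding sample_mgf_def mgf_rest_def by (simp add: exp_add[symmetric] algebra_simps)
qed

lemma sample_mgf_J:
  "sample_mgf \<sigma> J z = indicator S (restrict (covs z) I, score z)
     * exp (- lam (covs z) * thr (covs z) + (lam (covs z))\<^sup>2 * nwt_sq (covs z) / 8)"
proof -
  have "(\<Prod>k\<in>J. mgf_factor \<sigma> J (covs z) (below z) (score z) k) = exp ((lam (covs z))\<^sup>2 * nwt_sq (covs z) / 8)"
    by (simp add: mgf_factor_def nwt_sq_def exp_sum[OF finite_J] sum_distrib_left sum_divide_distrib
        power_mult_distrib)
  thus ?thesis unfolding sample_mgf_def mgf_rest_def by (simp add: exp_add[symmetric] algebra_simps)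
qed

lemma nn_integral_sample_mgf_insert:
  assumes \<sigma>: "\<bar>\<sigma>\<bar> = 1" and j: "j \<in> J" "j \<notin> K"
  shows "(\<integral>\<^sup>+z. sample_mgf \<sigma> K z \<partial>PP) \<le> (\<integral>\<^sup>+z. sample_mgf \<sigma> (insert j K) z \<partial>PP)"
proof -
  interpret product_sigma_finite "\<lambda>_::nat. \<nu>"
    using prob_space_nu by (simp add: product_sigma_finite_def prob_space_imp_sigma_finite)
  have jI: "j \<in> I" "j \<noteq> i" using j J_subset_I by (auto simp: J_def)
  have \<sigma>2: "\<sigma>\<^sup>2 = 1" using \<sigma> by (metis power2_abs power_one)
  have coordinate: "(\<integral>\<^sup>+z. f z \<partial>PP) = (\<integral>\<^sup>+x. (\<integral>\<^sup>+y. f (x(j := y)) \<partial>\<nu>) \<partial>PiM (I - {j}) (\<lambda>_. \<nu>))"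
    if "f \<in> borel_measurable PP" for f
    using product_nn_integral_insert[of "I - {j}" j f] that finite_I jI by (simp add: PP_def insert_absorb)
  have "(\<integral>\<^sup>+y. sample_mgf \<sigma> K (x(j := y)) \<partial>\<nu>) \<le> (\<integral>\<^sup>+y. sample_mgf \<sigma> (insert j K) (x(j := y)) \<partial>\<nu>)" for x
  proof -
    define W where "W u = mgf_rest \<sigma> K {j} ((covs x)(j := u)) (below x) (score x)" for u
    define t where "t u = \<sigma> * (lam ((covs x)(j := u)) * nwt ((covs x)(j := u)) j)" for u
    have covs: "covs (x(j := y)) = (covs x)(j := fst y)"
      and below: "below (x(j := y)) = (below x)(j := if V y < score x then 1 else 0)"
      and score: "score (x(j := y)) = score x" for y
      using jI by (auto simp: covs_def below_def score_def)
    have "sample_mgf \<sigma> K (x(j := y)) = W (fst y) * exp (t (fst y) * ((if V y < score x then 1 else 0) - F_cube (fst y) (score x)))"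
      and "sample_mgf \<sigma> (insert j K) (x(j := y)) = W (fst y) * exp ((t (fst y))\<^sup>2 / 8)" for y
      unfolding sample_mgf_def covs below score W_def t_def mgf_rest_remove[OF j(1)]
      using j \<sigma>2 by (simp_all add: mgf_rest_insert mgf_rest_upd mgf_factor_def power_mult_distrib mult_ac)
    moreover have "below x \<in> space (PiM UNIV (\<lambda>_. borel :: real measure))"
      by (simp add: space_PiM PiE_def extensional_def)
    hence "W \<in> borel_measurable borel"
      unfolding W_def by (intro measurable_mgf_rest measurable_fun_upd measurable_const) auto
    moreover have "t \<in> borel_measurable borel"
      unfolding t_def by (intro borel_measurable_times borel_measurable_const measurable_lam_nwt[OF measurable_fun_upd])
    ultimately show ?thesis
      using nn_integral_cond_hoeffding[of W t] mgf_rest_nonneg by (simp add: W_def)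
  qed
  hence "(\<integral>\<^sup>+x. (\<integral>\<^sup>+y. sample_mgf \<sigma> K (x(j := y)) \<partial>\<nu>) \<partial>PiM (I - {j}) (\<lambda>_. \<nu>))
      \<le> (\<integral>\<^sup>+x. (\<integral>\<^sup>+y. sample_mgf \<sigma> (insert j K) (x(j := y)) \<partial>\<nu>) \<partial>PiM (I - {j}) (\<lambda>_. \<nu>))"
    by (rule nn_integral_mono)
  thus ?thesis by (simp add: coordinate)
qed

lemma nn_integral_sample_mgf_mono:
  assumes "\<bar>\<sigma>\<bar> = 1" "K \<subseteq> J"
  shows "(\<integral>\<^sup>+z. sample_mgf \<sigma> {} z \<partial>PP) \<le> (\<integral>\<^sup>+z. sample_mgf \<sigma> K z \<partial>PP)"
  using finite_subset[OF assms(2) finite_J] assms(2)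
proof (induction K rule: finite_induct)
  case (insert j K)
  thus ?case using nn_integral_sample_mgf_insert[OF assms(1), of j K] by (auto intro: order_trans)
qed simp

lemma nwt_sq_pos: "nwt_sq xs > 0"
proof -
  obtain k where k: "k \<in> J" using J_nonempty by blast
  have "0 < (nwt xs k)\<^sup>2" using wt_pos[of xs k] wsum_pos[of xs] by (simp add: nwt_def)
  also have "\<dots> \<le> nwt_sq xs" unfolding nwt_sq_def by (rule member_le_sum) (use k finite_J in auto)
  finally show ?thesis .
qed

lemma nwt_sq_le:
  assumes cube: "\<And>k. k \<in> I \<Longrightarrow> xs k \<in> unit_cube"
  shows "nwt_sq xs \<le> 1 / wsum xs"
proof -
  have "wt xs k \<le> 1" if "k \<in> I" for k
    using d_nonneg[OF cube[OF i_in_I] cube[OF that]] h_pos[of n] by (simp add: wt_def kernH_def)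
  hence "(\<Sum>k\<in>J. (wt xs k)\<^sup>2) \<le> (\<Sum>k\<in>J. wt xs k)"
    using J_subset_I wt_pos[of xs] by (intro sum_mono) (auto simp: power2_eq_square mult_left_le)
  also have "\<dots> \<le> wsum xs"
    unfolding wsum_def using J_subset_I finite_I by (intro sum_mono2) (auto intro: less_imp_le wt_pos)
  finally show ?thesis
    using wsum_pos[of xs] by (simp add: nwt_sq_def nwt_def power_divide sum_divide_distrib[symmetric]
      field_simps power2_eq_square)
qed

lemma chernoff_exponent_le:
  assumes cube: "\<And>k. k \<in> I \<Longrightarrow> xs k \<in> unit_cube"
  shows "exp (- lam xs * thr xs + (lam xs)\<^sup>2 * nwt_sq xs / 8) \<le> 1 / (real n)\<^sup>2"
proof -
  have q: "nwt_sq xs > 0" by (rule nwt_sq_pos)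
  have thr_sq: "(thr xs)\<^sup>2 = ln (real n) / wsum xs" using n_ge_2 wsum_pos[of xs] by (simp add: thr_def)
  have "ln (real n) * nwt_sq xs \<le> ln (real n) * (1 / wsum xs)"
    using nwt_sq_le[OF cube] n_ge_2 by (intro mult_left_mono) auto
  hence "ln (real n) \<le> (thr xs)\<^sup>2 / nwt_sq xs" using q wsum_pos[of xs] by (simp add: thr_sq field_simps)
  moreover have "- lam xs * thr xs + (lam xs)\<^sup>2 * nwt_sq xs / 8 = - 2 * (thr xs)\<^sup>2 / nwt_sq xs"
    using q by (simp add: lam_def field_simps power2_eq_square)
  ultimately have "exp (- lam xs * thr xs + (lam xs)\<^sup>2 * nwt_sq xs / 8) \<le> exp (- 2 * ln (real n))" by simp
  also have "\<dots> = inverse (exp (ln (real n)) ^ 2)"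
    by (simp add: exp_minus exp_of_nat_mult[symmetric] mult.commute)
  also have "\<dots> = 1 / (real n)\<^sup>2" using n_ge_2 by (simp add: divide_inverse)
  finally show ?thesis .
qed

lemma AE_covs_in_unit_cube: "AE z in PP. \<forall>k\<in>I. covs z k \<in> unit_cube"
proof -
  have sample: "PP = distr M PP (\<lambda>\<omega>. \<lambda>j\<in>I. (X j \<omega>, Y j \<omega>))"
    unfolding PP_def using distr_sample[of I] i_in_I finite_I by (auto simp: I_def)
  have "AE \<omega> in M. \<forall>k\<in>I. X k \<omega> \<in> unit_cube"
    by (rule AE_finite_allI[OF finite_I]) (auto intro: AE_X_in_unit_cube simp: I_def)
  hence "AE \<omega> in M. \<forall>k\<in>I. covs (\<lambda>j\<in>I. (X j \<omega>, Y j \<omega>)) k \<in> unit_cube"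
    by (rule AE_mp) (auto simp: covs_def)
  moreover have "{z \<in> space PP. \<forall>k\<in>I. covs z k \<in> unit_cube} \<in> sets PP"
    using finite_I by measurable
  ultimately show ?thesis
    by (subst sample, subst AE_distr_iff) (auto simp: PP_def)
qed

lemma emeasure_resid_tail_le:
  assumes "\<bar>\<sigma>\<bar> = 1"
  shows "emeasure PP {z \<in> space PP. (restrict (covs z) I, score z) \<in> S \<and> \<sigma> * resid z \<ge> thr (covs z)}
     \<le> ennreal (1 / (real n)\<^sup>2) * emeasure PP {z \<in> space PP. (restrict (covs z) I, score z) \<in> S}"
proof -
  have "emeasure PP {z \<in> space PP. (restrict (covs z) I, score z) \<in> S \<and> \<sigma> * resid z \<ge> thr (covs z)}
      = (\<integral>\<^sup>+z. indicator {z \<in> space PP. (restrict (covs z) I, score z) \<in> S \<and> \<sigma> * resid z \<ge> thr (covs z)} z \<partial>PP)"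
    by (rule nn_integral_indicator[symmetric]) measurable
  also have "\<dots> \<le> (\<integral>\<^sup>+z. sample_mgf \<sigma> {} z \<partial>PP)"
    using lam_nonneg by (intro nn_integral_mono) (auto simp: indicator_def sample_mgf_empty)
  also have "\<dots> \<le> (\<integral>\<^sup>+z. sample_mgf \<sigma> J z \<partial>PP)"
    by (rule nn_integral_sample_mgf_mono[OF assms order_refl])
  also have "\<dots> \<le> (\<integral>\<^sup>+z. ennreal (1 / (real n)\<^sup>2) * indicator {z \<in> space PP. (restrict (covs z) I, score z) \<in> S} z \<partial>PP)"
    using AE_covs_in_unit_cube
  proof (rule nn_integral_mono_AE[OF AE_mp], intro AE_I2 impI)
    fix z assume "\<forall>k\<in>I. covs z k \<in> unit_cube" "z \<in> space PP"
    thus "ennreal (sample_mgf \<sigma> J z) \<le> ennreal (1 / (real n)\<^sup>2) * indicator {z \<in> space PP. (restrict (covs z) I, score z) \<in> S} z"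
      using chernoff_exponent_le[of "covs z"] by (auto simp: sample_mgf_J indicator_def intro!: ennreal_leI)
  qed
  also have "\<dots> = ennreal (1 / (real n)\<^sup>2) * emeasure PP {z \<in> space PP. (restrict (covs z) I, score z) \<in> S}"
    by (rule nn_integral_cmult_indicator) measurable
  finally show ?thesis .
qed

lemma emeasure_abs_resid_tail_le:
  "emeasure PP {z \<in> space PP. (restrict (covs z) I, score z) \<in> S \<and> \<bar>resid z\<bar> \<ge> thr (covs z)}
     \<le> ennreal (2 / (real n)\<^sup>2) * emeasure PP {z \<in> space PP. (restrict (covs z) I, score z) \<in> S}"
proof -
  define G where "G = {z \<in> space PP. (restrict (covs z) I, score z) \<in> S}"
  define Q where "Q \<sigma> = {z \<in> space PP. (restrict (covs z) I, score z) \<in> S \<and> \<sigma> * resid z \<ge> thr (covs z)}"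
    for \<sigma> :: real
  have [measurable]: "Q \<sigma> \<in> sets PP" for \<sigma> unfolding Q_def by measurable
  have "{z \<in> space PP. (restrict (covs z) I, score z) \<in> S \<and> \<bar>resid z\<bar> \<ge> thr (covs z)} \<subseteq> Q 1 \<union> Q (-1)"
    by (auto simp: Q_def abs_if split: if_splits)
  hence "emeasure PP {z \<in> space PP. (restrict (covs z) I, score z) \<in> S \<and> \<bar>resid z\<bar> \<ge> thr (covs z)}
      \<le> emeasure PP (Q 1 \<union> Q (-1))"
    by (intro emeasure_mono) measurable
  also have "\<dots> \<le> emeasure PP (Q 1) + emeasure PP (Q (-1))"
    by (rule emeasure_subadditive) measurable
  also have "\<dots> \<le> ennreal (1 / (real n)\<^sup>2) * emeasure PP G + ennreal (1 / (real n)\<^sup>2) * emeasure PP G"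
    unfolding Q_def G_def by (intro add_mono emeasure_resid_tail_le) auto
  also have "\<dots> = ennreal (2 / (real n)\<^sup>2) * emeasure PP G"
    by (simp add: distrib_right[symmetric] ennreal_plus[symmetric] del: ennreal_plus)
  finally show ?thesis unfolding G_def .
qed

lemma resid_sample:
  assumes cube: "\<forall>k\<in>I. X k \<omega> \<in> unit_cube"
  defines "z \<equiv> \<lambda>j\<in>I. (X j \<omega>, Y j \<omega>)"
  shows "resid z = Rstat d (h n) F X (\<lambda>j \<omega>. V (X j \<omega>, Y j \<omega>)) n i \<omega>"
    and "thr (covs z) = sqrt (ln (real n) / Bsum d (h n) X n (X i \<omega>) \<omega>)"
proof -
  have covs: "covs z k = X k \<omega>" if "k \<in> I" for k using that by (simp add: covs_def z_def)
  have wsum: "wsum (covs z) = Bsum d (h n) X n (X i \<omega>) \<omega>"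
    unfolding wsum_def Bsum_def wt_def using i_in_I by (intro sum.cong) (auto simp: covs I_def)
  show "thr (covs z) = sqrt (ln (real n) / Bsum d (h n) X n (X i \<omega>) \<omega>)"
    by (simp add: thr_def wsum)
  have score: "score z = V (X i \<omega>, Y i \<omega>)" using i_in_I by (simp add: score_def z_def)
  have "nwt (covs z) k * (below z k - F_cube (covs z k) (score z))
      = kernH d (h n) (X i \<omega>) (X k \<omega>) * ((if V (X k \<omega>, Y k \<omega>) < V (X i \<omega>, Y i \<omega>) then 1 else 0)
          - F (X k \<omega>) (V (X i \<omega>, Y i \<omega>))) / Bsum d (h n) X n (X i \<omega>) \<omega>" if "k \<in> J" for k
  proof -
    have k: "k \<in> I" using that J_subset_I by auto
    have "below z k = (if V (X k \<omega>, Y k \<omega>) < V (X i \<omega>, Y i \<omega>) then 1 else 0)"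
      using k by (simp add: below_def score) (simp add: z_def)
    thus ?thesis using k cube by (simp add: nwt_def wt_def wsum covs[OF k] covs[OF i_in_I] score F_cube_def)
  qed
  thus "resid z = Rstat d (h n) F X (\<lambda>j \<omega>. V (X j \<omega>, Y j \<omega>)) n i \<omega>"
    unfolding resid_def Rstat_def J_def by (simp add: sum_divide_distrib[symmetric])
qed

lemma prob_Rstat_large_inter_le:
  defines "A \<equiv> {\<omega> \<in> space M. \<bar>Rstat d (h n) F X (\<lambda>j \<omega>. V (X j \<omega>, Y j \<omega>)) n i \<omega>\<bar>
                   \<ge> sqrt (ln (real n) / Bsum d (h n) X n (X i \<omega>) \<omega>)}"
    and "W \<equiv> \<lambda>\<omega>. ((\<lambda>j\<in>{1..n+1}. X j \<omega>), V (X i \<omega>, Y i \<omega>))"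
  assumes A: "A \<in> sets M"
  shows "prob (A \<inter> (W -` S \<inter> space M)) \<le> 2 / (real n)\<^sup>2 * prob (W -` S \<inter> space M)"
proof -
  interpret sample: prob_space PP unfolding PP_def by (rule prob_space_PiM) (rule prob_space_nu)
  define T where "T \<omega> = (\<lambda>j\<in>I. (X j \<omega>, Y j \<omega>))" for \<omega>
  define G where "G = {z \<in> space PP. (restrict (covs z) I, score z) \<in> S}"
  define Q where "Q = {z \<in> space PP. (restrict (covs z) I, score z) \<in> S \<and> \<bar>resid z\<bar> \<ge> thr (covs z)}"
  have T: "T \<in> M \<rightarrow>\<^sub>M PP" "distr M PP T = PP"
    unfolding T_def PP_def using distr_sample[of I] finite_I i_in_I by (auto simp: I_def)
  have [measurable]: "G \<in> sets PP" "Q \<in> sets PP" unfolding G_def Q_def by measurable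
  have "(restrict (covs (T \<omega>)) I, score (T \<omega>)) = W \<omega>" for \<omega>
    using i_in_I by (auto simp: covs_def score_def T_def W_def I_def)
  hence WG: "W -` S \<inter> space M = T -` G \<inter> space M"
    using measurable_space[OF T(1)] by (auto simp: G_def)
  have "AE \<omega> in M. \<forall>k\<in>I. X k \<omega> \<in> unit_cube"
    by (rule AE_finite_allI[OF finite_I]) (auto intro: AE_X_in_unit_cube simp: I_def)
  hence "AE \<omega> in M. \<omega> \<in> A \<inter> (W -` S \<inter> space M) \<longleftrightarrow> \<omega> \<in> T -` Q \<inter> space M"
    by (rule AE_mp) (use WG measurable_space[OF T(1)] in \<open>auto simp: A_def Q_def G_def T_def resid_sample\<close>)
  hence "prob (A \<inter> (W -` S \<inter> space M)) = prob (T -` Q \<inter> space M)"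
    using A measurable_sets[OF T(1)] WG by (intro finite_measure_eq_AE) auto
  also have "\<dots> = measure PP Q" using measure_distr[OF T(1), of Q] T(2) by simp
  also have "\<dots> \<le> 2 / (real n)\<^sup>2 * measure PP G"
    using emeasure_abs_resid_tail_le by (simp add: Q_def G_def sample.emeasure_eq_measure ennreal_mult[symmetric])
  also have "measure PP G = prob (W -` S \<inter> space M)" using measure_distr[OF T(1), of G] T(2) WG by simp
  finally show ?thesis .
qed

end

context kernel_score_model
begin

lemma cond_sigma_sets:
  fixes n i :: nat
  defines "W \<equiv> \<lambda>\<omega>. ((\<lambda>j\<in>{1..n+1}. X j \<omega>), V (X i \<omega>, Y i \<omega>))"
    and "N \<equiv> PiM {1..n+1} (\<lambda>_. borel :: (real^'p) measure) \<Otimes>\<^sub>M (borel :: real measure)"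
  shows "sets (cond_sigma M X (\<lambda>j \<omega>. V (X j \<omega>, Y j \<omega>)) n i) = {W -` S \<inter> space M | S. S \<in> sets N}"
    and "subalgebra M (cond_sigma M X (\<lambda>j \<omega>. V (X j \<omega>, Y j \<omega>)) n i)"
proof -
  have W: "W \<in> M \<rightarrow>\<^sub>M N" unfolding W_def N_def by measurable
  have G: "cond_sigma M X (\<lambda>j \<omega>. V (X j \<omega>, Y j \<omega>)) n i = vimage_algebra (space M) W N"
    by (simp add: cond_sigma_def W_def N_def)
  show sets_G: "sets (cond_sigma M X (\<lambda>j \<omega>. V (X j \<omega>, Y j \<omega>)) n i) = {W -` S \<inter> space M | S. S \<in> sets N}"
    unfolding G by (rule sets_vimage_algebra2) (use measurable_space[OF W] in auto)
  show "subalgebra M (cond_sigma M X (\<lambda>j \<omega>. V (X j \<omega>, Y j \<omega>)) n i)"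
    unfolding subalgebra_def using sets_G measurable_sets[OF W] by (auto simp: G)
qed

lemma cond_prob_Rstat_large_le:
  assumes n: "n \<ge> 1" and i: "i \<in> {1..n+1}"
  shows "AE \<omega> in M.
          real_cond_exp M (cond_sigma M X (\<lambda>j \<omega>. V (X j \<omega>, Y j \<omega>)) n i)
            (indicator {\<omega>' \<in> space M.
                \<bar>Rstat d (h n) F X (\<lambda>j \<omega>. V (X j \<omega>, Y j \<omega>)) n i \<omega>'\<bar>
                  \<ge> sqrt (ln (real n) / Bsum d (h n) X n (X i \<omega>') \<omega>')}) \<omega>
          \<le> 2 / real n ^ 2"
proof -
  define A where "A = {\<omega>' \<in> space M. \<bar>Rstat d (h n) F X (\<lambda>j \<omega>. V (X j \<omega>, Y j \<omega>)) n i \<omega>'\<bar>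
                  \<ge> sqrt (ln (real n) / Bsum d (h n) X n (X i \<omega>') \<omega>')}"
  define G where "G = cond_sigma M X (\<lambda>j \<omega>. V (X j \<omega>, Y j \<omega>)) n i"
  show ?thesis unfolding G_def[symmetric] A_def[symmetric]
  proof (cases "A \<in> sets M")
    case False
    \<comment> \<open>\<open>F\<close> is jointly measurable only on the cube, so \<open>A\<close> need not be an event; then
      \<open>real_cond_exp\<close> returns a junk value, which is still \<open>\<le> 0\<close>.\<close>
    have "A \<subseteq> space M" by (auto simp: A_def)
    hence "real_cond_exp M G (indicator A) \<omega> \<le> 2 / real n ^ 2" for \<omega>
      using real_cond_exp_indicator_nonmeasurable[OF _ False, of G \<omega>] by (auto intro: order_trans)
    thus "AE \<omega> in M. real_cond_exp M G (indicator A) \<omega> \<le> 2 / real n ^ 2" by simp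
  next
    case True
    show "AE \<omega> in M. real_cond_exp M G (indicator A) \<omega> \<le> 2 / real n ^ 2"
    proof (rule real_cond_exp_indicator_le[OF cond_sigma_sets(2)[of n i, folded G_def] True])
      fix B assume "B \<in> sets G"
      then obtain S where S: "S \<in> sets (PiM {1..n+1} (\<lambda>_. borel) \<Otimes>\<^sub>M borel)"
        and B: "B = (\<lambda>\<omega>. ((\<lambda>j\<in>{1..n+1}. X j \<omega>), V (X i \<omega>, Y i \<omega>))) -` S \<inter> space M"
        unfolding G_def cond_sigma_sets(1) by auto
      show "prob (A \<inter> B) \<le> 2 / real n ^ 2 * prob B"
      proof (cases "n = 1")
        case True
        have "prob (A \<inter> B) \<le> prob B" using B S by (intro finite_measure_mono) (auto, measurable)
        also have "\<dots> \<le> 2 * prob B" by simp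
        finally show ?thesis using True by simp
      next
        case False
        interpret kernel_score_tail M X Y MY V d F L \<beta> h n i S
          using n False i S by unfold_locales auto
        show ?thesis using prob_Rstat_large_inter_le True by (simp add: A_def B)
      qed
    qed
  qed
qed

end

theorem lemmaA4:
  fixes M :: "'a measure"
    and X :: "nat \<Rightarrow> 'a \<Rightarrow> real^'p"
    and Y :: "nat \<Rightarrow> 'a \<Rightarrow> 'y"
    and MY :: "'y measure"
    and V :: "(real^'p) \<times> 'y \<Rightarrow> real"
    and d :: "real^'p \<Rightarrow> real^'p \<Rightarrow> real"
    and F :: "real^'p \<Rightarrow> real \<Rightarrow> real"
    and pX :: "real^'p \<Rightarrow> real"
    and L \<beta> :: real
    and h :: "nat \<Rightarrow> real"
  assumes P: "prob_space M"
    and meas_X: "\<And>i. X i \<in> borel_measurable M"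
    and meas_Y: "\<And>i. Y i \<in> M \<rightarrow>\<^sub>M MY"
    and meas_V: "V \<in> borel_measurable (borel \<Otimes>\<^sub>M MY)"
    and indep: "prob_space.indep_vars M (\<lambda>_. borel \<Otimes>\<^sub>M MY) (\<lambda>i \<omega>. (X i \<omega>, Y i \<omega>)) {1..}"
    and ident: "\<And>i. i \<ge> 1 \<Longrightarrow>
        distr M (borel \<Otimes>\<^sub>M MY) (\<lambda>\<omega>. (X i \<omega>, Y i \<omega>)) = distr M (borel \<Otimes>\<^sub>M MY) (\<lambda>\<omega>. (X 1 \<omega>, Y 1 \<omega>))"
    and dens: "distributed M lborel (X 1) (\<lambda>x. ennreal (pX x))"
    and support: "AE \<omega> in M. X 1 \<omega> \<in> unit_cube"
    and L_pos: "L > 0" and beta_nonneg: "\<beta> \<ge> 0"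
    and dens_lb: "\<And>x. x \<in> unit_cube \<Longrightarrow> pX x \<ge> 1 / L"
    and meas_d: "case_prod d \<in> borel_measurable borel"
    and d_nonneg: "\<And>x x'. x \<in> unit_cube \<Longrightarrow> x' \<in> unit_cube \<Longrightarrow> d x x' \<ge> 0"
    and d_refl: "\<And>x. x \<in> unit_cube \<Longrightarrow> d x x = 0"
    and F_meas: "\<And>v. (\<lambda>x. F x v) \<in> borel_measurable borel"
    and F_cdf: "\<And>x. x \<in> unit_cube \<Longrightarrow>
        mono (F x) \<and> continuous_on UNIV (F x) \<and> (F x \<longlongrightarrow> 0) at_bot \<and> (F x \<longlongrightarrow> 1) at_top"
    and F_cond: "\<And>A v. A \<in> sets borel \<Longrightarrow>
        measure M {\<omega> \<in> space M. X 1 \<omega> \<in> A \<and> V (X 1 \<omega>, Y 1 \<omega>) \<le> v}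
          = set_lebesgue_integral (distr M borel (X 1)) A (\<lambda>x. F x v)"
    and lip: "\<And>x x' v. x \<in> unit_cube \<Longrightarrow> x' \<in> unit_cube \<Longrightarrow> \<bar>F x v - F x' v\<bar> \<le> L * d x x'"
    and small_ball: "\<And>n \<epsilon> x0. 0 < \<epsilon> \<Longrightarrow> \<epsilon> \<le> h n \<Longrightarrow> x0 \<in> unit_cube \<Longrightarrow>
        measure M {\<omega> \<in> space M. d x0 (X 1 \<omega>) \<le> \<epsilon>} \<ge> \<epsilon> powr \<beta> / L"
    and h_pos: "\<And>n. h n > 0"
    and h_lim: "h \<longlonglongrightarrow> 0"
    and h_rate: "filterlim (\<lambda>n. real n * h n powr \<beta> / ln (real n)) at_top sequentially"
  shows
    "(\<forall>n. \<forall>x0\<in>unit_cube.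
        measure M {\<omega> \<in> space M. Bsum d (h n) X n x0 \<omega> \<le> real n * h n powr \<beta> / (2 * exp 1 * L)}
          \<le> exp (- (real n * h n powr \<beta>) / (8 * L)))
     \<and> (\<exists>C>0. \<exists>N. \<forall>n\<ge>N. \<forall>x0\<in>unit_cube. AE \<omega> in M.
          Delta_sum d (h n) F X n x0 \<omega> / max (Bsum d (h n) X n x0 \<omega>) (real n * h n powr \<beta>)
            \<le> C * h n * ln (1 / h n))
     \<and> (\<forall>n\<ge>1. \<forall>i\<in>{1..n+1}. AE \<omega> in M.
          real_cond_exp M (cond_sigma M X (\<lambda>j \<omega>. V (X j \<omega>, Y j \<omega>)) n i)
            (indicator {\<omega>' \<in> space M.
                \<bar>Rstat d (h n) F X (\<lambda>j \<omega>. V (X j \<omega>, Y j \<omega>)) n i \<omega>'\<bar>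
                  \<ge> sqrt (ln (real n) / Bsum d (h n) X n (X i \<omega>') \<omega>')}) \<omega>
          \<le> 2 / real n ^ 2)"
proof -
  interpret kernel_score_model M X Y MY V d F L \<beta> h
    by (intro kernel_score_model.intro[OF P] kernel_score_model_axioms.intro) (fact assms)+
  show ?thesis
    using prob_Bsum_small_le Delta_ratio_bound cond_prob_Rstat_large_le by blast
qed

end
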